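(* Let $A\in\mathbb{R}^{m\times n}$ with $\operatorname{rk}(A)=m$, $b\in\mathbb{R}^m$, $P=\{x\in\mathbb{R}^n: Ax=b,\ x\ge\mathbb{0}\}$. Let $B\subseteq[n]$ be a feasible basis, $N=[n]\setminus B$, $x^*=(A_B^{-1}b,\mathbb{0}_N)\in P$, and let $x^{(0)}$ be a vertex of $P$. Consider the following procedure: for $t=0,1,\dots$, while $x^{(t)}\ne x^*$, take a conformal circuit decomposition $x^*-x^{(t)}=\sum_{j=1}^k h^{(j)}$ with $k\le n-m$, choose $g^{(t)}=h^{(j)}$ for some $j$ maximizing $\|h^{(j)}_N\|_1$, and set $x^{(t+1)}=\operatorname{aug}_P(x^{(t)},g^{(t)})$. Define $L_t=\{i\in[n]: x^*_i>n\kappa_A\|x^{(t)}_N\|_1\}$ and $R_t=\{i\in[n]: x^{(t)}_i\le(n-m)x^*_i\}$. Then for every iteration $t\ge0$, $L_t\subseteq L_{t+1}\subseteq B$ and $R_t\subseteq R_{t+1}$.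
   Context: An elementary vector of $\ker(A)$ is a nonzero $g\in\ker(A)$ with inclusion-minimal support among nonzero vectors of $\ker(A)$; $\kappa_A=\max\{|g_i|/|g_j|: g \text{ elementary},\ i,j\in\mathrm{supp}(g)\}$. Vectors $x,y$ are sign-compatible if $x_iy_i\ge0$ for all $i$; $x\sqsubseteq y$ means they are sign-compatible and $|x_i|\le|y_i|$ for all $i$. A conformal circuit decomposition of $x\in\ker(A)$ is an expression $x=\sum_{j=1}^k h^{(j)}$ with each $h^{(j)}$ elementary and $h^{(j)}\sqsubseteq x$ (one with $k\le n-m$ always exists). For $x\in P$ and elementary $g$, $\operatorname{aug}_P(x,g)=x+\alpha g$ with $\alpha=\max\{\bar\alpha: x+\bar\alpha g\in P\}$. *)

theory Defs
  imports "HOL-Analysis.Analysis"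
begin

text \<open>Vectors in R^n are \<open>real^'n\<close>, matrices A in R^(m x n) are \<open>real^'n^'m\<close>;
  n = CARD('n), m = CARD('m), indices [n] are the elements of type 'n.\<close>

definition polyhedron_std :: "real^'n^'m \<Rightarrow> real^'m \<Rightarrow> (real^'n) set" where
  "polyhedron_std A b = {x. A *v x = b \<and> (\<forall>i. 0 \<le> x $ i)}"

definition kerA :: "real^'n^'m \<Rightarrow> (real^'n) set" where
  "kerA A = {x. A *v x = 0}"

definition supp :: "real^'n \<Rightarrow> 'n set" where
  "supp x = {i. x $ i \<noteq> 0}"

definition elementary :: "real^'n^'m \<Rightarrow> real^'n \<Rightarrow> bool" where
  "elementary A g \<longleftrightarrow> g \<in> kerA A \<and> g \<noteq> 0 \<and>
     (\<forall>h. h \<in> kerA A \<and> h \<noteq> 0 \<longrightarrow> \<not> (supp h \<subset> supp g))"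

definition kappa :: "real^'n^'m \<Rightarrow> real" where
  "kappa A = Sup {\<bar>g $ i\<bar> / \<bar>g $ j\<bar> | g i j. elementary A g \<and> i \<in> supp g \<and> j \<in> supp g}"

definition sign_compatible :: "real^'n \<Rightarrow> real^'n \<Rightarrow> bool" where
  "sign_compatible x y \<longleftrightarrow> (\<forall>i. 0 \<le> x $ i * y $ i)"

definition conf_le :: "real^'n \<Rightarrow> real^'n \<Rightarrow> bool" where
  "conf_le x y \<longleftrightarrow> sign_compatible x y \<and> (\<forall>i. \<bar>x $ i\<bar> \<le> \<bar>y $ i\<bar>)"

definition conformal_circuit_decomp ::
    "real^'n^'m \<Rightarrow> real^'n \<Rightarrow> nat \<Rightarrow> (nat \<Rightarrow> real^'n) \<Rightarrow> bool" where
  "conformal_circuit_decomp A x k h \<longleftrightarrow>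
     x = (\<Sum>j<k. h j) \<and> (\<forall>j<k. elementary A (h j) \<and> conf_le (h j) x)"

definition aug :: "(real^'n) set \<Rightarrow> real^'n \<Rightarrow> real^'n \<Rightarrow> real^'n" where
  "aug P x g = x + (GREATEST \<alpha>. x + \<alpha> *\<^sub>R g \<in> P) *\<^sub>R g"

definition is_basis :: "real^'n^'m \<Rightarrow> 'n set \<Rightarrow> bool" where
  "is_basis A B \<longleftrightarrow> card B = CARD('m) \<and> inj_on (\<lambda>i. column i A) B \<and>
     independent ((\<lambda>i. column i A) ` B)"

text \<open>The basic solution x = (A_B^{-1} b, 0_N): the unique x with A x = b, x_N = 0.\<close>
definition basic_solution :: "real^'n^'m \<Rightarrow> real^'m \<Rightarrow> 'n set \<Rightarrow> real^'n \<Rightarrow> bool" where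
  "basic_solution A b B x \<longleftrightarrow> A *v x = b \<and> (\<forall>i. i \<notin> B \<longrightarrow> x $ i = 0)"

definition norm1_on :: "'n set \<Rightarrow> real^'n \<Rightarrow> real" where
  "norm1_on N x = (\<Sum>i\<in>N. \<bar>x $ i\<bar>)"

end

theory Submission
  imports Defs
begin

text \<open>Write \<open>x' = x + \<alpha> g\<close> for one augmentation step and \<open>N = -B\<close>. All parts \<open>h\<close> of the conformal
  decomposition of \<open>x\<^sup>* - x\<close> are nonpositive on \<open>N\<close>, because \<open>x\<^sup>*\<close> vanishes there; hence
  \<open>\<parallel>x\<^sub>N\<parallel>\<^sub>1\<close> is the sum of the \<open>\<parallel>h\<^sub>N\<parallel>\<^sub>1\<close>, which is at most \<open>k \<parallel>g\<^sub>N\<parallel>\<^sub>1\<close> by the choice of \<open>g\<close>.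
  Since \<open>g\<^sub>N \<noteq> 0\<close> (a kernel vector supported on the basis is zero), feasibility of \<open>x'\<close> on \<open>N\<close>
  bounds the step length by \<open>\<alpha> \<le> k \<le> n - m\<close>. Moving along \<open>g\<close> with \<open>\<alpha> \<ge> 0\<close> only decreases
  \<open>\<parallel>x\<^sub>N\<parallel>\<^sub>1\<close>, which makes \<open>L\<^sub>t\<close> grow, and on coordinates where \<open>g\<close> is positive it moves
  \<open>x\<^sub>i\<close> at most \<open>n - m\<close> times its distance to \<open>x\<^sup>*\<^sub>i\<close>, which keeps \<open>x\<^sub>i \<le> (n - m) x\<^sup>*\<^sub>i\<close>.
  Finally \<open>\<kappa>\<^sub>A \<ge> 1\<close> is a genuine (finite) supremum, since elementary vectors with equal
  supports are proportional.\<close>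

lemma conf_le_componentD:
  assumes "conf_le h y"
  shows "0 \<le> h $ i * y $ i" and "\<bar>h $ i\<bar> \<le> \<bar>y $ i\<bar>"
  using assms by (auto simp: conf_le_def sign_compatible_def)

lemma conf_le_component_nonpos:
  assumes "conf_le h y" and "y $ i \<le> 0"
  shows "h $ i \<le> 0"
  using conf_le_componentD[OF assms(1), of i] assms(2) by (auto simp: zero_le_mult_iff)

lemma conf_le_component_le:
  assumes "conf_le h y" and "0 < h $ i"
  shows "h $ i \<le> y $ i"
  using conf_le_componentD[OF assms(1), of i] assms(2) by (simp add: zero_le_mult_iff)

lemma conf_le_abs_component:
  assumes "conf_le h y"
  shows "\<bar>h $ i\<bar> = sgn (y $ i) * h $ i"
  using conf_le_componentD[OF assms, of i]
  by (auto simp: sgn_if zero_le_mult_iff)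

lemma norm1_on_nonneg: "0 \<le> norm1_on N x"
  by (simp add: norm1_on_def sum_nonneg)

lemma norm1_on_conformal_sum:
  assumes y_eq: "y = (\<Sum>j<k. h j)" and conf: "\<And>j. j < k \<Longrightarrow> conf_le (h j) y"
  shows "norm1_on N y = (\<Sum>j<k. norm1_on N (h j))"
proof -
  have "\<bar>y $ i\<bar> = (\<Sum>j<k. \<bar>h j $ i\<bar>)" for i
  proof -
    have "\<bar>y $ i\<bar> = sgn (y $ i) * y $ i"
      by (simp add: abs_sgn mult.commute)
    also have "\<dots> = sgn (y $ i) * (\<Sum>j<k. h j $ i)"
      using y_eq by (simp add: sum_component)
    also have "\<dots> = (\<Sum>j<k. \<bar>h j $ i\<bar>)"
      by (simp add: sum_distrib_left conf_le_abs_component[OF conf])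
    finally show ?thesis .
  qed
  then have "norm1_on N y = (\<Sum>i\<in>N. \<Sum>j<k. \<bar>h j $ i\<bar>)"
    by (simp add: norm1_on_def)
  also have "\<dots> = (\<Sum>j<k. norm1_on N (h j))"
    unfolding norm1_on_def by (rule sum.swap)
  finally show ?thesis .
qed

lemma kernel_vector_supported_on_basis_eq_0:
  fixes A :: "real^'n^'m"
  assumes basis: "is_basis A B" and ker: "A *v g = 0" and supp: "\<And>i. i \<notin> B \<Longrightarrow> g $ i = 0"
  shows "g = 0"
proof -
  let ?col = "\<lambda>i. column i A"
  have indep: "independent (?col ` B)" and inj: "inj_on ?col B"
    using basis by (auto simp: is_basis_def)
  define c where "c v = g $ inv_into B ?col v" for v
  have "(\<Sum>v\<in>?col ` B. c v *s v) = (\<Sum>i\<in>B. g $ i *s ?col i)"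
    by (simp add: sum.reindex[OF inj] c_def inv_into_f_f[OF inj])
  also have "\<dots> = A *v g"
    unfolding matrix_mult_sum by (rule sum.mono_neutral_left) (auto simp: supp)
  finally have "\<forall>v\<in>?col ` B. c v = 0"
    using indep ker by (simp add: independent_explicit scalar_mult_eq_scaleR)
  then have "g $ i = 0" if "i \<in> B" for i
    using that by (auto simp: c_def inv_into_f_f[OF inj])
  with supp show ?thesis
    by (metis vec_eq_iff zero_index)
qed

lemma polyhedron_std_add_kernel_iff:
  assumes "x \<in> polyhedron_std A b" and "A *v g = 0"
  shows "x + a *\<^sub>R g \<in> polyhedron_std A b \<longleftrightarrow> (\<forall>i. 0 \<le> x $ i + a * g $ i)"
  using assms by (simp add: polyhedron_std_def matrix_vector_right_distrib matrix_vector_mult_scaleR)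

lemma aug_polyhedron_std:
  assumes xP: "x \<in> polyhedron_std A b" and ker: "A *v g = 0" and neg: "g $ i0 < 0"
  obtains \<alpha> where "0 \<le> \<alpha>" and "aug (polyhedron_std A b) x g = x + \<alpha> *\<^sub>R g"
    and "x + \<alpha> *\<^sub>R g \<in> polyhedron_std A b"
proof -
  let ?P = "polyhedron_std A b"
  have x_nonneg: "0 \<le> x $ i" for i
    using xP by (simp add: polyhedron_std_def)
  have feasible_iff: "0 \<le> x $ i + a * g $ i \<longleftrightarrow> a \<le> x $ i / - g $ i" if "g $ i < 0" for a i
    using that by (auto simp: field_simps)
  define \<alpha> where "\<alpha> = Min ((\<lambda>i. x $ i / - g $ i) ` {i. g $ i < 0})"
  have \<alpha>_le_iff: "a \<le> \<alpha> \<longleftrightarrow> (\<forall>i. g $ i < 0 \<longrightarrow> a \<le> x $ i / - g $ i)" for a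
    unfolding \<alpha>_def using neg by (subst Min_ge_iff) auto
  have "0 \<le> \<alpha>"
    unfolding \<alpha>_le_iff using x_nonneg by (simp add: divide_nonneg_neg less_imp_le)
  have feasible: "x + a *\<^sub>R g \<in> ?P \<longleftrightarrow> (\<forall>i. 0 \<le> x $ i + a * g $ i)" for a
    using xP ker by (rule polyhedron_std_add_kernel_iff)
  have "x + \<alpha> *\<^sub>R g \<in> ?P"
    unfolding feasible
  proof
    fix i
    show "0 \<le> x $ i + \<alpha> * g $ i"
    proof (cases "g $ i < 0")
      case True
      then show ?thesis
        using \<alpha>_le_iff[of \<alpha>] feasible_iff by blast
    next
      case False
      then show ?thesis
        using \<open>0 \<le> \<alpha>\<close> x_nonneg[of i] by simp
    qed
  qed
  moreover have "a \<le> \<alpha>" if "x + a *\<^sub>R g \<in> ?P" for a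
    using that feasible feasible_iff \<alpha>_le_iff by blast
  ultimately have "(GREATEST a. x + a *\<^sub>R g \<in> ?P) = \<alpha>"
    by (intro Greatest_equality)
  with \<open>0 \<le> \<alpha>\<close> \<open>x + \<alpha> *\<^sub>R g \<in> ?P\<close> show ?thesis
    by (intro that) (simp_all add: aug_def)
qed

definition circuit_ratios :: "real^'n^'m \<Rightarrow> real set" where
  "circuit_ratios A = {\<bar>g $ i\<bar> / \<bar>g $ j\<bar> | g i j. elementary A g \<and> i \<in> supp g \<and> j \<in> supp g}"

lemma kappa_eq_Sup_circuit_ratios: "kappa A = Sup (circuit_ratios A)"
  by (simp add: kappa_def circuit_ratios_def)

lemma elementary_exists:
  fixes A :: "real^'n^'m"
  assumes "A *v v = 0" and "v \<noteq> 0"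
  obtains g where "elementary A g"
proof -
  obtain h where h: "h \<in> kerA A" "h \<noteq> 0"
    and min: "\<And>h'. h' \<in> kerA A \<and> h' \<noteq> 0 \<Longrightarrow> card (supp h) \<le> card (supp h')"
    using ex_has_least_nat[of "\<lambda>h. h \<in> kerA A \<and> h \<noteq> 0" v "\<lambda>h. card (supp h)"] assms
    by (auto simp: kerA_def)
  have "\<not> supp h' \<subset> supp h" if "h' \<in> kerA A \<and> h' \<noteq> 0" for h'
    using min[OF that] psubset_card_mono[of "supp h" "supp h'"] by auto
  with h show ?thesis
    by (intro that) (auto simp: elementary_def)
qed

lemma elementary_supp_eq_imp_scaleR:
  fixes A :: "real^'n^'m"
  assumes g: "elementary A g" and h: "elementary A h" and supp_eq: "supp g = supp h"
  obtains c where "c \<noteq> 0" and "h = c *\<^sub>R g"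
proof -
  obtain j where j: "g $ j \<noteq> 0"
    using g by (metis elementary_def vec_eq_iff zero_index)
  define c where "c = h $ j / g $ j"
  define r where "r = h - c *\<^sub>R g"
  have "r \<in> kerA A"
    using g h by (simp add: r_def elementary_def kerA_def matrix_vector_mult_diff_distrib
        matrix_vector_mult_scaleR)
  moreover have "supp r \<subset> supp g"
  proof
    show "supp r \<subseteq> supp g"
    proof
      fix i assume "i \<in> supp r"
      then have "i \<in> supp g \<union> supp h"
        by (auto simp: supp_def r_def)
      then show "i \<in> supp g"
        using supp_eq by simp
    qed
    have "j \<notin> supp r"
      using j by (simp add: supp_def r_def c_def)
    moreover have "j \<in> supp g"
      using j by (simp add: supp_def)
    ultimately show "supp r \<noteq> supp g"
      by blast
  qed
  ultimately have "r = 0"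
    using g unfolding elementary_def by blast
  then have "h = c *\<^sub>R g"
    by (simp add: r_def)
  moreover have "c \<noteq> 0"
    using h calculation by (auto simp: elementary_def)
  ultimately show ?thesis
    using that by blast
qed

lemma finite_circuit_ratios: "finite (circuit_ratios A)"
proof -
  define rep where "rep S = (SOME g. elementary A g \<and> supp g = S)" for S
  have "circuit_ratios A \<subseteq> (\<lambda>(S, i, j). \<bar>rep S $ i\<bar> / \<bar>rep S $ j\<bar>) ` UNIV"
  proof
    fix r assume "r \<in> circuit_ratios A"
    then obtain h i j where r: "r = \<bar>h $ i\<bar> / \<bar>h $ j\<bar>" and h: "elementary A h"
      unfolding circuit_ratios_def by blast
    define g where "g = rep (supp h)"
    have "elementary A g \<and> supp g = supp h"
      unfolding g_def rep_def by (rule someI[of _ h]) (simp add: h)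
    then obtain c where "c \<noteq> 0" and "h = c *\<^sub>R g"
      using elementary_supp_eq_imp_scaleR[of A g h] h by metis
    then have "r = \<bar>g $ i\<bar> / \<bar>g $ j\<bar>"
      by (simp add: r abs_mult)
    then show "r \<in> (\<lambda>(S, i, j). \<bar>rep S $ i\<bar> / \<bar>rep S $ j\<bar>) ` UNIV"
      unfolding g_def by (intro image_eqI[of _ _ "(supp h, i, j)"]) simp_all
  qed
  then show ?thesis
    by (rule finite_subset) simp
qed

lemma one_le_kappa:
  fixes A :: "real^'n^'m"
  assumes "A *v v = 0" and "v \<noteq> 0"
  shows "1 \<le> kappa A"
proof -
  obtain g where g: "elementary A g"
    using elementary_exists[OF assms] .
  then obtain i where "g $ i \<noteq> 0"
    by (metis elementary_def vec_eq_iff zero_index)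
  with g have "1 \<in> circuit_ratios A"
    unfolding circuit_ratios_def supp_def by force
  then show ?thesis
    unfolding kappa_eq_Sup_circuit_ratios
    by (simp add: cSup_upper bdd_above_finite finite_circuit_ratios)
qed

lemma conformal_part_nonpos_off_basis:
  assumes "basic_solution A b B xstar" and "x \<in> polyhedron_std A b"
    and "conf_le g (xstar - x)" and "i \<notin> B"
  shows "g $ i \<le> 0"
  using assms by (intro conf_le_component_nonpos[of g "xstar - x"])
    (auto simp: basic_solution_def polyhedron_std_def)

lemma augmentation_step_length:
  fixes A :: "real^'n^'m"
  assumes basis: "is_basis A B" and xstar: "basic_solution A b B xstar"
    and xP: "x \<in> polyhedron_std A b"
    and dec: "conformal_circuit_decomp A (xstar - x) k h" and "j < k"
    and max: "\<forall>j'<k. norm1_on (- B) (h j') \<le> norm1_on (- B) (h j)"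
  obtains \<alpha> where "0 \<le> \<alpha>" and "\<alpha> \<le> real k"
    and "aug (polyhedron_std A b) x (h j) = x + \<alpha> *\<^sub>R h j"
    and "x + \<alpha> *\<^sub>R h j \<in> polyhedron_std A b"
proof -
  define g where "g = h j"
  have decomp: "xstar - x = (\<Sum>j<k. h j)"
    and parts: "\<And>j. j < k \<Longrightarrow> elementary A (h j) \<and> conf_le (h j) (xstar - x)"
    using dec by (auto simp: conformal_circuit_decomp_def)
  have x_nonneg: "0 \<le> x $ i" for i
    using xP by (simp add: polyhedron_std_def)
  have g_off_basis: "g $ i \<le> 0" if "i \<notin> B" for i
    using conformal_part_nonpos_off_basis[OF xstar xP _ that] parts \<open>j < k\<close> by (simp add: g_def)
  have "A *v g = 0" and "g \<noteq> 0"
    using parts[OF \<open>j < k\<close>] by (auto simp: g_def elementary_def kerA_def)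
  then obtain i0 where "i0 \<notin> B" and "g $ i0 < 0"
    using kernel_vector_supported_on_basis_eq_0[OF basis] g_off_basis by (meson less_eq_real_def)
  then obtain \<alpha> where "0 \<le> \<alpha>" and aug: "aug (polyhedron_std A b) x g = x + \<alpha> *\<^sub>R g"
    and feasible: "x + \<alpha> *\<^sub>R g \<in> polyhedron_std A b"
    using aug_polyhedron_std[OF xP \<open>A *v g = 0\<close>] by blast
  have "\<alpha> * \<bar>g $ i\<bar> \<le> \<bar>x $ i\<bar>" if "i \<notin> B" for i
  proof -
    have "0 \<le> x $ i + \<alpha> * g $ i"
      using feasible by (simp add: polyhedron_std_def)
    then show ?thesis
      using g_off_basis[OF that] x_nonneg[of i] by simp
  qed
  then have "\<alpha> * norm1_on (- B) g \<le> norm1_on (- B) x"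
    unfolding norm1_on_def sum_distrib_left by (intro sum_mono) simp
  also have "norm1_on (- B) x = norm1_on (- B) (xstar - x)"
    using xstar by (simp add: norm1_on_def basic_solution_def)
  also have "\<dots> = (\<Sum>j'<k. norm1_on (- B) (h j'))"
    using decomp parts by (intro norm1_on_conformal_sum) auto
  also have "\<dots> \<le> real k * norm1_on (- B) g"
    using sum_bounded_above[of "{..<k}" "\<lambda>j'. norm1_on (- B) (h j')"] max by (simp add: g_def)
  finally have "\<alpha> * norm1_on (- B) g \<le> real k * norm1_on (- B) g" .
  moreover have "0 < norm1_on (- B) g"
    unfolding norm1_on_def using \<open>i0 \<notin> B\<close> \<open>g $ i0 < 0\<close> by (intro sum_pos2[of _ i0]) auto
  ultimately have "\<alpha> \<le> real k"
    by simp
  with \<open>0 \<le> \<alpha>\<close> aug feasible show ?thesis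
    using that by (simp add: g_def)
qed

lemma augmentation_step:
  fixes A :: "real^'n^'m"
  assumes basis: "is_basis A B" and xstar: "basic_solution A b B xstar"
    and xP: "x \<in> polyhedron_std A b" and k: "k \<le> CARD('n) - CARD('m)"
    and dec: "conformal_circuit_decomp A (xstar - x) k h" and "j < k"
    and max: "\<forall>j'<k. norm1_on (- B) (h j') \<le> norm1_on (- B) (h j)"
  defines "x' \<equiv> aug (polyhedron_std A b) x (h j)"
  shows "x' \<in> polyhedron_std A b"
    and "norm1_on (- B) x' \<le> norm1_on (- B) x"
    and "x $ i \<le> (real CARD('n) - real CARD('m)) * xstar $ i
      \<Longrightarrow> x' $ i \<le> (real CARD('n) - real CARD('m)) * xstar $ i"
proof -
  obtain \<alpha> where "0 \<le> \<alpha>" "\<alpha> \<le> real k" and x': "x' = x + \<alpha> *\<^sub>R h j"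
    and x'P: "x + \<alpha> *\<^sub>R h j \<in> polyhedron_std A b"
    using augmentation_step_length[OF basis xstar xP dec \<open>j < k\<close> max] unfolding x'_def .
  have conf: "conf_le (h j) (xstar - x)"
    using dec \<open>j < k\<close> unfolding conformal_circuit_decomp_def by blast
  have x_nonneg: "0 \<le> x $ i" and x'_nonneg: "0 \<le> x' $ i" for i
    using xP x'P by (simp_all add: x' polyhedron_std_def)
  show "x' \<in> polyhedron_std A b"
    using x'P x' by simp
  have "\<bar>x' $ i\<bar> \<le> \<bar>x $ i\<bar>" if "i \<in> - B" for i
    using conformal_part_nonpos_off_basis[OF xstar xP conf, of i] that \<open>0 \<le> \<alpha>\<close>
      x_nonneg[of i] x'_nonneg[of i] by (simp add: x' mult_nonneg_nonpos)
  then show "norm1_on (- B) x' \<le> norm1_on (- B) x"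
    unfolding norm1_on_def by (rule sum_mono)
  define D where "D = real CARD('n) - real CARD('m)"
  have "1 \<le> D" and "real k \<le> D"
    using \<open>j < k\<close> k by (auto simp: D_def)
  assume "x $ i \<le> (real CARD('n) - real CARD('m)) * xstar $ i"
  then have le: "x $ i \<le> D * xstar $ i"
    by (simp add: D_def)
  have "x' $ i \<le> D * xstar $ i"
  proof (cases "0 < h j $ i")
    case True
    have "\<alpha> * h j $ i \<le> D * (xstar $ i - x $ i)"
      using conf_le_component_le[OF conf True] \<open>\<alpha> \<le> real k\<close> \<open>real k \<le> D\<close> True \<open>0 \<le> \<alpha>\<close>
      by (intro mult_mono) auto
    moreover have "1 * x $ i \<le> D * x $ i"
      using \<open>1 \<le> D\<close> x_nonneg[of i] by (rule mult_right_mono)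
    ultimately show ?thesis
      by (simp add: x' right_diff_distrib)
  next
    case False
    then have "\<alpha> * h j $ i \<le> 0"
      using \<open>0 \<le> \<alpha>\<close> by (simp add: mult_nonneg_nonpos)
    with le show ?thesis
      by (simp add: x')
  qed
  then show "x' $ i \<le> (real CARD('n) - real CARD('m)) * xstar $ i"
    by (simp add: D_def)
qed

theorem lemma3p2:
  fixes A :: "real^'n^'m" and b :: "real^'m" and B :: "'n set"
    and xstar :: "real^'n" and x :: "nat \<Rightarrow> real^'n" and g :: "nat \<Rightarrow> real^'n"
    and t :: nat
  assumes rank: "rank A = CARD('m)"
    and basis: "is_basis A B"
    and xstar: "basic_solution A b B xstar"
    and feasible: "xstar \<in> polyhedron_std A b"
    and vertex: "x 0 extreme_point_of (polyhedron_std A b)"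
    and step: "\<And>s. x s \<noteq> xstar \<Longrightarrow>
       (\<exists>k h j. k \<le> CARD('n) - CARD('m) \<and>
          conformal_circuit_decomp A (xstar - x s) k h \<and>
          j < k \<and> (\<forall>j'<k. norm1_on (- B) (h j') \<le> norm1_on (- B) (h j)) \<and>
          g s = h j) \<and>
       x (Suc s) = aug (polyhedron_std A b) (x s) (g s)"
    and running: "\<forall>s\<le>t. x s \<noteq> xstar"
  defines "L \<equiv> \<lambda>s. {i. xstar $ i > real CARD('n) * kappa A * norm1_on (- B) (x s)}"
    and "R \<equiv> \<lambda>s. {i. x s $ i \<le> (real CARD('n) - real CARD('m)) * xstar $ i}"
  shows "L t \<subseteq> L (Suc t) \<and> L (Suc t) \<subseteq> B \<and> R t \<subseteq> R (Suc t)"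
proof -
  let ?P = "polyhedron_std A b"
  have next_step: "x (Suc s) \<in> ?P \<and> norm1_on (- B) (x (Suc s)) \<le> norm1_on (- B) (x s) \<and>
      R s \<subseteq> R (Suc s)" if "s \<le> t" and "x s \<in> ?P" for s
  proof -
    obtain k h j where "k \<le> CARD('n) - CARD('m)" "conformal_circuit_decomp A (xstar - x s) k h"
      "j < k" "\<forall>j'<k. norm1_on (- B) (h j') \<le> norm1_on (- B) (h j)"
      and "x (Suc s) = aug ?P (x s) (h j)"
      using step running \<open>s \<le> t\<close> by metis
    from augmentation_step[OF basis xstar \<open>x s \<in> ?P\<close> this(1-4)] this(5) show ?thesis
      by (auto simp: R_def)
  qed
  have "x s \<in> ?P" if "s \<le> t" for s
    using that by (induction s) (use vertex next_step in \<open>auto simp: extreme_point_of_def\<close>)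
  then have xt: "x t \<in> ?P" and decrease: "norm1_on (- B) (x (Suc t)) \<le> norm1_on (- B) (x t)"
    and "R t \<subseteq> R (Suc t)"
    using next_step by auto
  have "A *v (xstar - x t) = 0"
    using feasible xt by (simp add: polyhedron_std_def matrix_vector_mult_diff_distrib)
  moreover have "xstar - x t \<noteq> 0"
    using running by auto
  ultimately have "1 \<le> kappa A"
    by (rule one_le_kappa)
  then have "L t \<subseteq> L (Suc t)"
    using decrease by (auto simp: L_def intro: order.strict_trans1[OF mult_left_mono])
  moreover have "L (Suc t) \<subseteq> B"
  proof -
    have "0 \<le> real CARD('n) * kappa A * norm1_on (- B) (x (Suc t))"
      using \<open>1 \<le> kappa A\<close> by (simp add: norm1_on_nonneg)
    then show ?thesis
      using xstar by (auto simp: L_def basic_solution_def)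
  qed
  ultimately show ?thesis
    using \<open>R t \<subseteq> R (Suc t)\<close> by blast
qed

end
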